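(* Let $2\le r_1\le r_2$ be integers, let $\mathcal{F}=(\mathcal{F}_\alpha)_{\alpha\in\mathcal{A}}$ be a sequence of set families (each $\mathcal{F}_\alpha$ a family of non-empty subsets of $[n_\alpha]$), and let $m:\mathcal{A}\to\mathbb{N}$ be a function with $m(\alpha)<\chi(K^{r_2}(\mathcal{F}_\alpha))$ for all $\alpha\in\mathcal{A}$. Then $\textsc{Kneser}^{r_1}(\mathcal{F},m)$ is polynomial-time reducible to $\textsc{Kneser}^{r_2}(\mathcal{F},m)$.
   Context: For an integer $r\ge2$ and a set family $\mathcal{G}$, the Kneser hypergraph $K^r(\mathcal{G})$ has vertex set $\mathcal{G}$ and hyperedges all $r$-subsets of $\mathcal{G}$ whose members are pairwise disjoint; $\chi$ denotes the chromatic number (minimum number of colors in a coloring of the vertices with no monochromatic hyperedge). Subsets of $[n]$ are identified with characteristic vectors in $\{0,1\}^n$. The $\textsc{Kneser}^r(\mathcal{F},m)$ problem: given $\alpha\in\mathcal{A}$ and a Boolean circuit $C:\{0,1\}^{n_\alpha}\to[m(\alpha)]$ (representing the coloring $B\mapsto C(B)$ of $\mathcal{F}_\alpha$), find $r$ pairwise disjoint $B_1,\dots,B_r\in\mathcal{F}_\alpha$ with $C(B_1)=\dots=C(B_r)$. A polynomial-time reduction from $P$ to $Q$ consists of polynomial-time algorithms $f,g$ with $f$ mapping instances $x$ of $P$ to instances of $Q$ and $g(x,y)$ a solution of $x$ for every solution $y$ of $f(x)$. *)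

theory Defs
  imports Main
begin

definition kneser_hyperedges :: "nat \<Rightarrow> nat set set \<Rightarrow> nat set set set" where
  "kneser_hyperedges r G =
     {E. E \<subseteq> G \<and> card E = r \<and> (\<forall>B\<in>E. \<forall>B'\<in>E. B \<noteq> B' \<longrightarrow> B \<inter> B' = {})}"

definition proper_kneser_coloring :: "nat \<Rightarrow> nat set set \<Rightarrow> nat \<Rightarrow> (nat set \<Rightarrow> nat) \<Rightarrow> bool" where
  "proper_kneser_coloring r G k c \<longleftrightarrow>
     c ` G \<subseteq> {1..k} \<and> (\<forall>E\<in>kneser_hyperedges r G. \<exists>B\<in>E. \<exists>B'\<in>E. c B \<noteq> c B')"

definition kneser_chi :: "nat \<Rightarrow> nat set set \<Rightarrow> nat" where
  "kneser_chi r G = (LEAST k. \<exists>c. proper_kneser_coloring r G k c)"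

text \<open>Self-delimiting encoding of a list of bit strings: every bit doubled, each string
  terminated by the separator 01.\<close>
definition enc_list :: "bool list list \<Rightarrow> bool list" where
  "enc_list ss = concat (map (\<lambda>s. concat (map (\<lambda>b. [b, b]) s) @ [False, True]) ss)"

fun bin :: "nat \<Rightarrow> bool list" where
  "bin n = (if n = 0 then [] else (n mod 2 = 1) # bin (n div 2))"

fun bits_to_nat :: "bool list \<Rightarrow> nat" where
  "bits_to_nat [] = 0"
| "bits_to_nat (b # bs) = (if b then 1 else 0) + 2 * bits_to_nat bs"

text \<open>Characteristic vector in {0,1}^n of a subset of [n] = {1..n}.\<close>
definition charvec :: "nat \<Rightarrow> nat set \<Rightarrow> bool list" where
  "charvec n B = map (\<lambda>i. Suc i \<in> B) [0..<n]"

text \<open>Straight-line circuits: wires 0..nin-1 are the inputs, gate number j defines wire nin+j,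
  and may only refer to earlier wires; the output is a list of wires, read as a binary number
  (least significant bit first).\<close>
datatype gate = AndG nat nat | OrG nat nat | NotG nat

type_synonym circuit = "nat \<times> gate list \<times> nat list"

fun gate_refs :: "gate \<Rightarrow> nat list" where
  "gate_refs (AndG i j) = [i, j]"
| "gate_refs (OrG i j) = [i, j]"
| "gate_refs (NotG i) = [i]"

fun gate_val :: "bool list \<Rightarrow> gate \<Rightarrow> bool" where
  "gate_val ws (AndG i j) = (ws ! i \<and> ws ! j)"
| "gate_val ws (OrG i j) = (ws ! i \<or> ws ! j)"
| "gate_val ws (NotG i) = (\<not> ws ! i)"

definition circuit_wf :: "circuit \<Rightarrow> bool" where
  "circuit_wf C = (case C of (nin, gs, outs) \<Rightarrow>
     (\<forall>j < length gs. \<forall>i \<in> set (gate_refs (gs ! j)). i < nin + j)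
     \<and> (\<forall>w \<in> set outs. w < nin + length gs))"

definition eval_wires :: "gate list \<Rightarrow> bool list \<Rightarrow> bool list" where
  "eval_wires gs inp = fold (\<lambda>g ws. ws @ [gate_val ws g]) gs inp"

definition circuit_value :: "circuit \<Rightarrow> bool list \<Rightarrow> nat" where
  "circuit_value C v = (case C of (nin, gs, outs) \<Rightarrow>
     bits_to_nat (map (\<lambda>w. eval_wires gs v ! w) outs))"

definition valid_circuit :: "nat \<Rightarrow> nat \<Rightarrow> circuit \<Rightarrow> bool" where
  "valid_circuit n m C \<longleftrightarrow> circuit_wf C \<and> fst C = n \<and>
     (\<forall>v. length v = n \<longrightarrow> circuit_value C v \<in> {1..m})"

fun enc_gate :: "gate \<Rightarrow> bool list" where
  "enc_gate (AndG i j) = enc_list [[False, False], bin i, bin j]"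
| "enc_gate (OrG i j) = enc_list [[False, True], bin i, bin j]"
| "enc_gate (NotG i) = enc_list [[True, False], bin i]"

definition enc_circuit :: "circuit \<Rightarrow> bool list" where
  "enc_circuit C = (case C of (nin, gs, outs) \<Rightarrow>
     enc_list [bin nin, enc_list (map enc_gate gs), enc_list (map bin outs)])"

text \<open>A search problem: a set of (encoded) instances and a solution relation.\<close>
type_synonym problem = "bool list set \<times> (bool list \<Rightarrow> bool list \<Rightarrow> bool)"

datatype move = MoveL | MoveR | Stay

text \<open>Single-tape Turing machine on a one-way infinite tape. Symbols are naturals,
  0 is the blank, 1 encodes the bit 0 and 2 encodes the bit 1. The transition function
  returns None exactly when the machine halts.\<close>
type_synonym tm = "nat \<Rightarrow> nat \<Rightarrow> (nat \<times> nat \<times> move) option"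

text \<open>Configuration: state, tape left of the head (reversed), tape from the head on.\<close>
type_synonym config = "nat \<times> nat list \<times> nat list"

definition tm_finite :: "tm \<Rightarrow> bool" where
  "tm_finite M \<longleftrightarrow> (\<exists>Q S. 2 < S \<and>
     (\<forall>q s. (Q \<le> q \<or> S \<le> s) \<longrightarrow> M q s = None) \<and>
     (\<forall>q s q' w d. M q s = Some (q', w, d) \<longrightarrow> q' < Q \<and> w < S))"

definition head_sym :: "nat list \<Rightarrow> nat" where
  "head_sym r = (case r of [] \<Rightarrow> 0 | a # _ \<Rightarrow> a)"

definition tm_step :: "tm \<Rightarrow> config \<Rightarrow> config" where
  "tm_step M cfg = (case cfg of (q, l, r) \<Rightarrow>
     (case M q (head_sym r) of
        None \<Rightarrow> (q, l, r)
      | Some (q', w, d) \<Rightarrow>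
          (case d of
             MoveL \<Rightarrow> (case l of [] \<Rightarrow> (q', [], w # tl r) | a # l' \<Rightarrow> (q', l', a # w # tl r))
           | MoveR \<Rightarrow> (q', w # l, tl r)
           | Stay \<Rightarrow> (q', l, w # tl r))))"

definition tm_halted :: "tm \<Rightarrow> config \<Rightarrow> bool" where
  "tm_halted M cfg = (case cfg of (q, l, r) \<Rightarrow> M q (head_sym r) = None)"

definition tm_init :: "bool list \<Rightarrow> config" where
  "tm_init x = (0, [], map (\<lambda>b. if b then 2 else 1) x)"

definition tm_output :: "config \<Rightarrow> bool list" where
  "tm_output cfg = (case cfg of (q, l, r) \<Rightarrow>
     map (\<lambda>s. s = 2) (takeWhile (\<lambda>s. s = 1 \<or> s = 2) r))"

definition poly_time_computable :: "(bool list \<Rightarrow> bool list) \<Rightarrow> bool" where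
  "poly_time_computable f \<longleftrightarrow> (\<exists>M c. tm_finite M \<and>
     (\<forall>x. \<exists>t. t \<le> (length x + 2) ^ c \<and>
            tm_halted M ((tm_step M ^^ t) (tm_init x)) \<and>
            tm_output ((tm_step M ^^ t) (tm_init x)) = f x))"

definition poly_reducible :: "problem \<Rightarrow> problem \<Rightarrow> bool" where
  "poly_reducible P Q \<longleftrightarrow> (\<exists>f g. poly_time_computable f \<and> poly_time_computable g \<and>
     (\<forall>x \<in> fst P. f x \<in> fst Q \<and>
        (\<forall>y. snd Q (f x) y \<longrightarrow> snd P x (g (enc_list [x, y])))))"

definition enc_instance :: "('a \<Rightarrow> bool list) \<Rightarrow> 'a \<Rightarrow> circuit \<Rightarrow> bool list" where
  "enc_instance encA \<alpha> C = enc_list [encA \<alpha>, enc_circuit C]"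

definition enc_solution :: "nat \<Rightarrow> nat set list \<Rightarrow> bool list" where
  "enc_solution n Bs = enc_list (map (charvec n) Bs)"

definition kneser_solution :: "nat \<Rightarrow> nat set set \<Rightarrow> (nat set \<Rightarrow> nat) \<Rightarrow> nat set list \<Rightarrow> bool" where
  "kneser_solution r G col Bs \<longleftrightarrow> length Bs = r \<and> (\<forall>i < r. Bs ! i \<in> G) \<and>
     (\<forall>i < r. \<forall>j < r. i \<noteq> j \<longrightarrow> Bs ! i \<inter> Bs ! j = {}) \<and>
     (\<forall>i < r. \<forall>j < r. col (Bs ! i) = col (Bs ! j))"

definition Kneser_problem ::
  "nat \<Rightarrow> 'a set \<Rightarrow> ('a \<Rightarrow> bool list) \<Rightarrow> ('a \<Rightarrow> nat) \<Rightarrow> ('a \<Rightarrow> nat set set) \<Rightarrow> ('a \<Rightarrow> nat) \<Rightarrow> problem" where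
  "Kneser_problem r A encA n F m =
     ({enc_instance encA \<alpha> C | \<alpha> C. \<alpha> \<in> A \<and> valid_circuit (n \<alpha>) (m \<alpha>) C},
      (\<lambda>x y. \<exists>\<alpha> C Bs. \<alpha> \<in> A \<and> valid_circuit (n \<alpha>) (m \<alpha>) C \<and>
         x = enc_instance encA \<alpha> C \<and> y = enc_solution (n \<alpha>) Bs \<and>
         kneser_solution r (F \<alpha>) (\<lambda>B. circuit_value C (charvec (n \<alpha>) B)) Bs))"

end

theory Submission
  imports Defs "HOL-Library.Countable"
begin

text \<open>Both problems have the same instances, and any r1 of the r2 sets in a solution of
  Kneser^r2 form a solution of Kneser^r1. So the reduction is the identity on instances, and
  the solution map keeps the first r1 fields of the encoded solution list. The only work is to
  do this on a Turing machine: it skips the instance, then repeatedly moves one bit of the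
  solution to the end of the tape while counting separators, which takes quadratically many
  steps.\<close>

section \<open>Runs of Turing machines\<close>

lemma head_sym_simps [simp]: "head_sym [] = 0" "head_sym (x # r) = x"
  by (simp_all add: head_sym_def)

lemma tm_halted_iff: "tm_halted M (q, l, r) \<longleftrightarrow> M q (head_sym r) = None"
  by (simp add: tm_halted_def)

lemma tm_step_right: "M q x = Some (q', w, MoveR) \<Longrightarrow> tm_step M (q, l, x # r) = (q', w # l, r)"
  by (simp add: tm_step_def)

lemma tm_step_left: "M q x = Some (q', w, MoveL) \<Longrightarrow> tm_step M (q, a # l, x # r) = (q', l, a # w # r)"
  by (simp add: tm_step_def)

lemma tm_step_stay_blank: "M q 0 = Some (q', w, Stay) \<Longrightarrow> tm_step M (q, l, []) = (q', l, [w])"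
  by (simp add: tm_step_def)

lemma funpow_tm_step_halted: "tm_halted M c \<Longrightarrow> (tm_step M ^^ t) c = c"
proof (induction t)
  case (Suc t)
  then show ?case by (cases c) (simp add: tm_halted_def tm_step_def)
qed simp

lemma tm_sweep_right:
  assumes "\<forall>x\<in>set Z. M q x = Some (q, f x, MoveR)"
  shows "(tm_step M ^^ length Z) (q, l, Z @ r) = (q, rev (map f Z) @ l, r)"
  using assms
proof (induction Z arbitrary: l)
  case (Cons z Z)
  then have "tm_step M (q, l, (z # Z) @ r) = (q, f z # l, Z @ r)"
    by (simp add: tm_step_right)
  with Cons show ?case by (simp add: funpow_Suc_right del: funpow.simps)
qed simp

lemma tm_sweep_left_to_marker:
  assumes "\<forall>x\<in>set Z. M q x = Some (q, x, MoveL)" "M q s = Some (q, s, MoveL)"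
    "M q mark = Some (q', mark, MoveR)"
  shows "(tm_step M ^^ (length Z + 2)) (q, rev Z @ mark # l, s # r) = (q', mark # l, Z @ s # r)"
  using assms(1,2)
proof (induction Z arbitrary: s r rule: rev_induct)
  case Nil
  then show ?case using assms(3) by (simp add: numeral_2_eq_2 tm_step_left tm_step_right)
next
  case (snoc z Z)
  then have "tm_step M (q, rev (Z @ [z]) @ mark # l, s # r) = (q, rev Z @ mark # l, z # s # r)"
    by (simp add: tm_step_left)
  with snoc show ?case by (simp add: funpow_Suc_right del: funpow.simps)
qed

text \<open>The output at the first halting time; unspecified if the machine does not halt.\<close>
definition tm_fun :: "tm \<Rightarrow> bool list \<Rightarrow> bool list" where
  "tm_fun M x = tm_output ((tm_step M ^^ (LEAST t. tm_halted M ((tm_step M ^^ t) (tm_init x)))) (tm_init x))"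

lemma tm_fun_eqI:
  assumes "tm_halted M ((tm_step M ^^ t) (tm_init x))"
  shows "tm_fun M x = tm_output ((tm_step M ^^ t) (tm_init x))"
proof -
  define L where "L = (LEAST t. tm_halted M ((tm_step M ^^ t) (tm_init x)))"
  have "L \<le> t" and halted: "tm_halted M ((tm_step M ^^ L) (tm_init x))"
    unfolding L_def using assms by (auto intro: Least_le LeastI)
  then have "t = (t - L) + L" by simp
  then have "(tm_step M ^^ t) (tm_init x) = (tm_step M ^^ (t - L)) ((tm_step M ^^ L) (tm_init x))"
    by (metis funpow_add o_apply)
  also have "\<dots> = (tm_step M ^^ L) (tm_init x)"
    using halted by (rule funpow_tm_step_halted)
  finally show ?thesis by (simp add: tm_fun_def L_def)
qed

lemma poly_time_computable_tm_fun:
  assumes "tm_finite M"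
    and "\<And>x. \<exists>t \<le> (length x + 2) ^ c. tm_halted M ((tm_step M ^^ t) (tm_init x))"
  shows "poly_time_computable (tm_fun M)"
  unfolding poly_time_computable_def
proof (rule exI[of _ M], rule exI[of _ c], intro conjI allI)
  fix x
  from assms(2) obtain t where t: "t \<le> (length x + 2) ^ c" "tm_halted M ((tm_step M ^^ t) (tm_init x))"
    by blast
  then show "\<exists>t \<le> (length x + 2) ^ c. tm_halted M ((tm_step M ^^ t) (tm_init x)) \<and>
      tm_output ((tm_step M ^^ t) (tm_init x)) = tm_fun M x"
    using tm_fun_eqI[OF t(2)] by auto
qed fact

lemma poly_time_computable_id: "poly_time_computable (\<lambda>x. x)"
proof -
  let ?M = "\<lambda>_ _. None :: (nat \<times> nat \<times> move) option"
  have "tm_output (tm_init x) = x" for x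
    by (induction x) (auto simp: tm_output_def tm_init_def)
  then have "tm_fun ?M = (\<lambda>x. x)"
    by (intro ext) (simp add: tm_fun_eqI[where t = 0] tm_halted_def tm_init_def)
  moreover have "poly_time_computable (tm_fun ?M)"
  proof (rule poly_time_computable_tm_fun[where c = 0])
    show "tm_finite ?M"
      unfolding tm_finite_def by (intro exI[of _ 0] exI[of _ 3]) simp
  qed (auto simp: tm_halted_def tm_init_def)
  ultimately show ?thesis by simp
qed

section \<open>Machines with a countable type of states\<close>

text \<open>Machines start in state 0, so the initial state gets code 0.\<close>
definition state_code :: "'s::countable \<Rightarrow> 's \<Rightarrow> nat" where
  "state_code s0 s = (if s = s0 then 0 else Suc (to_nat s))"

lemma inj_state_code: "inj (state_code s0)"
  by (rule injI) (auto simp: state_code_def split: if_splits)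

definition state_tm ::
  "'s::countable \<Rightarrow> 's set \<Rightarrow> ('s \<Rightarrow> nat \<Rightarrow> ('s \<times> nat \<times> move) option) \<Rightarrow> tm" where
  "state_tm s0 V \<delta> q x = (if q \<in> state_code s0 ` V
     then map_option (\<lambda>(s', w, d). (state_code s0 s', w, d)) (\<delta> (inv_into V (state_code s0) q) x)
     else None)"

lemma state_tm_code:
  assumes "s \<in> V"
  shows "state_tm s0 V \<delta> (state_code s0 s) x = map_option (\<lambda>(s', w, d). (state_code s0 s', w, d)) (\<delta> s x)"
proof -
  have "inj_on (state_code s0) V"
    using inj_state_code by (rule inj_on_subset) simp
  with assms show ?thesis by (simp add: state_tm_def)
qed

lemma tm_finite_state_tm:
  assumes "finite V" "2 < S"
    and closed: "\<And>s x s' w d. s \<in> V \<Longrightarrow> \<delta> s x = Some (s', w, d) \<Longrightarrow> s' \<in> V \<and> w < S \<and> x < S"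
  shows "tm_finite (state_tm s0 V \<delta>)"
proof -
  define Q where "Q = Suc (Max (state_code s0 ` V))"
  have code_less: "q < Q" if "q \<in> state_code s0 ` V" for q
    using that assms(1) by (simp add: Q_def le_imp_less_Suc)
  have halts: "state_tm s0 V \<delta> q x = None" if "Q \<le> q \<or> S \<le> x" for q x
  proof (cases "q \<in> state_code s0 ` V")
    case True
    then obtain s where "s \<in> V" "q = state_code s0 s" by blast
    moreover have "S \<le> x" using that code_less[OF True] by linarith
    ultimately show ?thesis using closed[of s x] by (cases "\<delta> s x") (auto simp: state_tm_code)
  qed (simp add: state_tm_def)
  have bounded: "q' < Q \<and> w < S" if step: "state_tm s0 V \<delta> q x = Some (q', w, d)" for q x q' w d
  proof -
    from step obtain s where "s \<in> V" "q = state_code s0 s"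
      by (auto simp: state_tm_def split: if_splits)
    with step obtain s' where "\<delta> s x = Some (s', w, d)" "q' = state_code s0 s'"
      by (auto simp: state_tm_code)
    with closed[OF \<open>s \<in> V\<close>] show ?thesis by (auto intro: code_less)
  qed
  show ?thesis
    unfolding tm_finite_def using assms(2) halts bounded by blast
qed

section \<open>Fields of encoded lists\<close>

definition double :: "'a list \<Rightarrow> 'a list" where
  "double s = concat (map (\<lambda>b. [b, b]) s)"

lemma double_simps [simp]:
  "double [] = []" "double (b # s) = b # b # double s" "double (s @ t) = double s @ double t"
  by (simp_all add: double_def)

lemma enc_list_simps [simp]:
  "enc_list [] = []" "enc_list (c # cs) = double c @ False # True # enc_list cs"
  by (simp_all add: enc_list_def double_def)

fun undouble :: "'a list \<Rightarrow> 'a list" where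
  "undouble (a # _ # w) = a # undouble w"
| "undouble _ = []"

lemma undouble_double: "undouble (double s @ w) = s @ undouble w"
  by (induction s) auto

fun drop_first_field :: "bool list \<Rightarrow> bool list option" where
  "drop_first_field (a # b # w) = (if \<not> a \<and> b then Some w else drop_first_field w)"
| "drop_first_field _ = None"

lemma drop_first_field_double: "drop_first_field (double s @ False # True # w) = Some w"
  by (induction s) auto

text \<open>Counter for the fields of an encoded list read bit by bit: the number of separators 01
  completed so far, and the first bit of a pair that has been read only half.\<close>
fun sep_step :: "nat \<times> bool option \<Rightarrow> bool \<Rightarrow> nat \<times> bool option" where
  "sep_step (k, None) b = (k, Some b)"
| "sep_step (k, Some a) b = (if \<not> a \<and> b then Suc k else k, None)"

lemma fst_sep_step_le: "fst c < R \<Longrightarrow> fst (sep_step c b) \<le> R"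
  by (cases "(c, b)" rule: sep_step.cases) auto

fun take_fields :: "nat \<Rightarrow> nat \<times> bool option \<Rightarrow> bool list \<Rightarrow> bool list" where
  "take_fields R c [] = []"
| "take_fields R c (a # w) = a # (if fst (sep_step c a) = R then [] else take_fields R (sep_step c a) w)"

fun has_fields :: "nat \<Rightarrow> nat \<times> bool option \<Rightarrow> bool list \<Rightarrow> bool" where
  "has_fields R c [] = False"
| "has_fields R c (a # w) = (fst (sep_step c a) = R \<or> has_fields R (sep_step c a) w)"

lemma take_fields_double:
  "k < R \<Longrightarrow> take_fields R (k, None) (double s @ w) = double s @ take_fields R (k, None) w \<and>
    has_fields R (k, None) (double s @ w) = has_fields R (k, None) w"
  by (induction s) auto

lemma take_fields_enc_list:
  "k < R \<Longrightarrow> R - k \<le> length cs \<Longrightarrow>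
    take_fields R (k, None) (enc_list cs @ w) = enc_list (take (R - k) cs) \<and> has_fields R (k, None) (enc_list cs @ w)"
proof (induction cs arbitrary: k)
  case (Cons c cs)
  then have "R - k = Suc (R - Suc k)" by simp
  then have "take (R - k) (c # cs) = c # take (R - Suc k) cs" by simp
  with Cons show ?case
    by (cases "Suc k = R") (simp_all add: take_fields_double)
qed simp

section \<open>A machine keeping the first R fields of the solution\<close>

definition bit_sym :: "bool \<Rightarrow> nat" where
  "bit_sym b = (if b then 2 else 1)"

definition out_sym :: "bool \<Rightarrow> nat" where
  "out_sym b = (if b then 5 else 4)"

lemma bit_sym_simps [simp]:
  "bit_sym a = 2 \<longleftrightarrow> a" "bit_sym a = 1 \<longleftrightarrow> \<not> a" "bit_sym a = Suc 0 \<longleftrightarrow> \<not> a" "bit_sym a \<noteq> 0" "bit_sym a \<noteq> 3"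
  "bit_sym a \<noteq> 4" "bit_sym a \<noteq> 5" "bit_sym a \<le> 2" "bit_sym True = 2" "bit_sym False = 1"
  by (auto simp: bit_sym_def)

lemma out_sym_simps [simp]:
  "out_sym a \<noteq> 0" "out_sym a \<noteq> 1" "out_sym a \<noteq> Suc 0" "out_sym a \<noteq> 2" "out_sym a \<noteq> 3"
  "out_sym a = 5 \<longleftrightarrow> a" "out_sym a = 4 \<longleftrightarrow> \<not> a" "\<not> out_sym a \<le> 2"
  by (auto simp: out_sym_def)

text \<open>Tape symbols: 0 blank, 1 and 2 the input bits, 3 a consumed cell, 4 and 5 the bits
  copied so far behind the input. Every input bit comes twice, as the input is an enc_list.
  Seek and SeekPair consume pairs up to the separator after the instance. Each round then
  consumes one pair (Read, Skip), appends its bit at the end of the tape (Carry) and walks back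
  to the last consumed cell (Return), counting fields with sep_step. After R fields, Clean
  consumes the rest of the input and decodes 4 and 5, and Rewind moves the head onto the output.\<close>
datatype trunc_state = Seek | SeekPair bool | Read "nat \<times> bool option"
  | Skip "nat \<times> bool option" bool | Carry "nat \<times> bool option" bool | Return "nat \<times> bool option"
  | Clean | Rewind | Done

instance trunc_state :: countable
  by countable_datatype

fun trunc_delta :: "nat \<Rightarrow> trunc_state \<Rightarrow> nat \<Rightarrow> (trunc_state \<times> nat \<times> move) option" where
  "trunc_delta R Seek s = (if s \<in> {1, 2} then Some (SeekPair (s = 2), 3, MoveR) else None)"
| "trunc_delta R (SeekPair a) s = (if s \<in> {1, 2}
     then Some (if \<not> a \<and> s = 2 then Read (0, None) else Seek, 3, MoveR) else None)"
| "trunc_delta R (Read c) s = (if s \<in> {1, 2} then Some (Skip (sep_step c (s = 2)) (s = 2), 3, MoveR) else None)"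
| "trunc_delta R (Skip c b) s = (if s \<in> {1, 2} then Some (Carry c b, 3, MoveR) else None)"
| "trunc_delta R (Carry c b) s = (if s \<in> {1, 2, 4, 5} then Some (Carry c b, s, MoveR)
     else if s = 0 then Some (Return c, out_sym b, Stay) else None)"
| "trunc_delta R (Return c) s = (if s \<in> {1, 2, 4, 5} then Some (Return c, s, MoveL)
     else if s = 3 then Some (if fst c = R then Clean else Read c, 3, MoveR) else None)"
| "trunc_delta R Clean s = (if s \<in> {1, 2} then Some (Clean, 3, MoveR)
     else if s \<in> {4, 5} then Some (Clean, s - 3, MoveR)
     else if s = 0 then Some (Rewind, 0, Stay) else None)"
| "trunc_delta R Rewind s = (if s \<le> 2 then Some (Rewind, s, MoveL)
     else if s = 3 then Some (Done, 3, MoveR) else None)"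
| "trunc_delta R Done s = None"

definition trunc_states :: "nat \<Rightarrow> trunc_state set" where
  "trunc_states R = {Seek, SeekPair False, SeekPair True, Clean, Rewind, Done}
     \<union> Read ` ({..<R} \<times> UNIV) \<union> Return ` ({..R} \<times> UNIV)
     \<union> case_prod Skip ` (({..R} \<times> UNIV) \<times> UNIV) \<union> case_prod Carry ` (({..R} \<times> UNIV) \<times> UNIV)"

lemma trunc_states_iff [simp]:
  "Read c \<in> trunc_states R \<longleftrightarrow> fst c < R" "Return c \<in> trunc_states R \<longleftrightarrow> fst c \<le> R"
  "Skip c b \<in> trunc_states R \<longleftrightarrow> fst c \<le> R" "Carry c b \<in> trunc_states R \<longleftrightarrow> fst c \<le> R"
  "Seek \<in> trunc_states R" "SeekPair a \<in> trunc_states R" "Clean \<in> trunc_states R"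
  "Rewind \<in> trunc_states R" "Done \<in> trunc_states R"
  by (cases a; auto simp: trunc_states_def image_iff mem_Times_iff)+

definition trunc_tm :: "nat \<Rightarrow> tm" where
  "trunc_tm R = state_tm Seek (trunc_states R) (trunc_delta R)"

abbreviation trunc_cfg :: "trunc_state \<Rightarrow> nat list \<Rightarrow> nat list \<Rightarrow> config" where
  "trunc_cfg s l r \<equiv> (state_code Seek s, l, r)"

lemma tm_init_trunc_cfg: "tm_init w = trunc_cfg Seek [] (map bit_sym w)"
  by (simp add: tm_init_def state_code_def bit_sym_def)

lemma trunc_tm_code [simp]:
  "s \<in> trunc_states R \<Longrightarrow>
    trunc_tm R (state_code Seek s) x = map_option (\<lambda>(s', w, d). (state_code Seek s', w, d)) (trunc_delta R s x)"
  by (simp add: trunc_tm_def state_tm_code)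

lemma tm_finite_trunc_tm:
  assumes "0 < R"
  shows "tm_finite (trunc_tm R)"
  unfolding trunc_tm_def
proof (rule tm_finite_state_tm[where S = 6])
  show "finite (trunc_states R)"
    by (simp add: trunc_states_def)
  fix s x s' w d
  assume "s \<in> trunc_states R" "trunc_delta R s x = Some (s', w, d)"
  then show "s' \<in> trunc_states R \<and> w < 6 \<and> x < 6"
    using assms by (cases s) (auto simp: out_sym_def fst_sep_step_le split: if_splits)
qed simp

lemma trunc_tm_halted:
  "s \<in> trunc_states R \<Longrightarrow> trunc_delta R s (head_sym r) = None \<Longrightarrow> tm_halted (trunc_tm R) (trunc_cfg s l r)"
  by (simp add: tm_halted_iff)

lemma trunc_tm_seek_pair:
  "(tm_step (trunc_tm R) ^^ 2) (trunc_cfg Seek l (map bit_sym (a # b # w)))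
    = trunc_cfg (if \<not> a \<and> b then Read (0, None) else Seek) (3 # 3 # l) (map bit_sym w)"
proof -
  have "tm_step (trunc_tm R) (trunc_cfg Seek l (bit_sym a # bit_sym b # map bit_sym w))
      = trunc_cfg (SeekPair a) (3 # l) (bit_sym b # map bit_sym w)"
    by (rule tm_step_right) simp
  moreover have "tm_step (trunc_tm R) (trunc_cfg (SeekPair a) (3 # l) (bit_sym b # map bit_sym w))
      = trunc_cfg (if \<not> a \<and> b then Read (0, None) else Seek) (3 # 3 # l) (map bit_sym w)"
    by (rule tm_step_right) simp
  ultimately show ?thesis by (simp add: numeral_2_eq_2)
qed

lemma trunc_tm_seek:
  "drop_first_field w = Some rest \<Longrightarrow> \<exists>l'. length rest < length w \<and>
    (tm_step (trunc_tm R) ^^ (length w - length rest)) (trunc_cfg Seek l (map bit_sym w))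
      = trunc_cfg (Read (0, None)) (3 # l') (map bit_sym rest)"
proof (induction w arbitrary: l rule: drop_first_field.induct)
  case (1 a b w)
  show ?case
  proof (cases "\<not> a \<and> b")
    case True
    with 1 trunc_tm_seek_pair[of R l a b w] show ?thesis by auto
  next
    case False
    with "1.prems" have "drop_first_field w = Some rest" by simp
    with "1.IH"[OF False] obtain l' where l': "length rest < length w"
      "(tm_step (trunc_tm R) ^^ (length w - length rest)) (trunc_cfg Seek (3 # 3 # l) (map bit_sym w))
         = trunc_cfg (Read (0, None)) (3 # l') (map bit_sym rest)"
      by blast
    then have "length (a # b # w) - length rest = (length w - length rest) + 2" by simp
    with l' trunc_tm_seek_pair[of R l a b w] False show ?thesis
      by (simp only: funpow_add o_apply) auto
  qed
qed auto

lemma trunc_tm_seek_fails: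
  "drop_first_field w = None \<Longrightarrow>
    \<exists>t \<le> length w. tm_halted (trunc_tm R) ((tm_step (trunc_tm R) ^^ t) (trunc_cfg Seek l (map bit_sym w)))"
proof (induction w arbitrary: l rule: drop_first_field.induct)
  case (1 a b w)
  then have "\<not> (\<not> a \<and> b)" "drop_first_field w = None" by (auto split: if_splits)
  with "1.IH" obtain t where "t \<le> length w"
    "tm_halted (trunc_tm R) ((tm_step (trunc_tm R) ^^ t) (trunc_cfg Seek (3 # 3 # l) (map bit_sym w)))"
    by blast
  with trunc_tm_seek_pair[of R l a b w] \<open>\<not> (\<not> a \<and> b)\<close> show ?case
    by (intro exI[of _ "t + 2"]) (simp only: funpow_add o_apply, simp)
next
  case ("2_1" l)
  have "tm_halted (trunc_tm R) (trunc_cfg Seek l [])"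
    by (rule trunc_tm_halted) auto
  then show ?case by (intro exI[of _ 0]) auto
next
  case ("2_2" a l)
  have "tm_step (trunc_tm R) (trunc_cfg Seek l [bit_sym a]) = trunc_cfg (SeekPair a) (3 # l) []"
    by (rule tm_step_right) simp
  moreover have "tm_halted (trunc_tm R) (trunc_cfg (SeekPair a) (3 # l) [])"
    by (rule trunc_tm_halted) auto
  ultimately show ?case by (intro exI[of _ 1]) auto
qed

lemma mem_bit_out_syms: "x \<in> set (map bit_sym U @ map out_sym Os) \<Longrightarrow> x \<in> {1, 2, 4, 5}"
  by (auto simp: bit_sym_def out_sym_def)

lemma trunc_tm_copy_bit:
  assumes "fst c < R"
  shows "(tm_step (trunc_tm R) ^^ (2 * (length U + length Os) + 5))
      (trunc_cfg (Read c) l (map bit_sym (a # b # U) @ map out_sym Os))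
    = trunc_cfg (if fst (sep_step c a) = R then Clean else Read (sep_step c a))
        (3 # 3 # l) (map bit_sym U @ map out_sym (Os @ [a]))"
proof -
  define Z where "Z = map bit_sym U @ map out_sym Os"
  define c' where "c' = sep_step c a"
  define next_state where "next_state = (if fst c' = R then Clean else Read c')"
  let ?f = "tm_step (trunc_tm R)"
  have "fst c' \<le> R" using assms by (simp add: c'_def fst_sep_step_le)
  have read: "(?f ^^ 2) (trunc_cfg (Read c) l (bit_sym a # bit_sym b # Z))
      = trunc_cfg (Carry c' a) (3 # 3 # l) Z"
  proof -
    have "?f (trunc_cfg (Read c) l (bit_sym a # bit_sym b # Z)) = trunc_cfg (Skip c' a) (3 # l) (bit_sym b # Z)"
      by (rule tm_step_right) (simp add: assms c'_def)
    moreover have "?f (trunc_cfg (Skip c' a) (3 # l) (bit_sym b # Z)) = trunc_cfg (Carry c' a) (3 # 3 # l) Z"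
      by (rule tm_step_right) (simp add: \<open>fst c' \<le> R\<close>)
    ultimately show ?thesis by (simp add: numeral_2_eq_2)
  qed
  have carry: "(?f ^^ length Z) (trunc_cfg (Carry c' a) (3 # 3 # l) (Z @ []))
      = trunc_cfg (Carry c' a) (rev (map (\<lambda>x. x) Z) @ 3 # 3 # l) []"
    by (rule tm_sweep_right) (use \<open>fst c' \<le> R\<close> mem_bit_out_syms in \<open>fastforce simp: Z_def\<close>)
  have append: "?f (trunc_cfg (Carry c' a) (rev Z @ 3 # 3 # l) [])
      = trunc_cfg (Return c') (rev Z @ 3 # 3 # l) [out_sym a]"
    by (rule tm_step_stay_blank) (simp add: \<open>fst c' \<le> R\<close>)
  have return: "(?f ^^ (length Z + 2)) (trunc_cfg (Return c') (rev Z @ 3 # 3 # l) (out_sym a # []))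
      = trunc_cfg next_state (3 # 3 # l) (Z @ out_sym a # [])"
    by (rule tm_sweep_left_to_marker)
      (use \<open>fst c' \<le> R\<close> mem_bit_out_syms in \<open>fastforce simp: Z_def next_state_def\<close>)+
  have "2 * (length U + length Os) + 5 = (length Z + 2) + (1 + (length Z + 2))"
    by (simp add: Z_def)
  then have "(?f ^^ (2 * (length U + length Os) + 5)) (trunc_cfg (Read c) l (bit_sym a # bit_sym b # Z))
      = trunc_cfg next_state (3 # 3 # l) (Z @ [out_sym a])"
    using read carry append return by (simp only: funpow_add o_apply) simp
  then show ?thesis by (simp add: Z_def next_state_def c'_def)
qed

lemma trunc_tm_clean:
  "(tm_step (trunc_tm R) ^^ (length U + 2 * length Os + 3))
      (trunc_cfg Clean (3 # l) (map bit_sym U @ map out_sym Os))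
    = trunc_cfg Done (3 # replicate (length U) 3 @ l) (map bit_sym Os @ [0])"
proof -
  let ?f = "tm_step (trunc_tm R)"
  let ?g = "\<lambda>x::nat. if x \<in> {4, 5} then x - 3 else 3"
  define l' where "l' = replicate (length U) 3 @ l"
  have cleaned: "map ?g (map bit_sym U @ map out_sym Os) = replicate (length U) 3 @ map bit_sym Os"
    by (induction U) (auto simp: bit_sym_def out_sym_def)
  have "(?f ^^ length (map bit_sym U @ map out_sym Os)) (trunc_cfg Clean (3 # l) ((map bit_sym U @ map out_sym Os) @ []))
     = trunc_cfg Clean (rev (map ?g (map bit_sym U @ map out_sym Os)) @ 3 # l) []"
    by (rule tm_sweep_right) (use mem_bit_out_syms in \<open>fastforce simp: bit_sym_def out_sym_def\<close>)
  then have sweep: "(?f ^^ (length U + length Os)) (trunc_cfg Clean (3 # l) (map bit_sym U @ map out_sym Os))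
     = trunc_cfg Clean (rev (map bit_sym Os) @ 3 # l') []"
    unfolding cleaned by (simp add: l'_def replicate_app_Cons_same)
  have mark_end: "?f (trunc_cfg Clean (rev (map bit_sym Os) @ 3 # l') [])
     = trunc_cfg Rewind (rev (map bit_sym Os) @ 3 # l') [0]"
    by (rule tm_step_stay_blank) simp
  have rewind: "(?f ^^ (length (map bit_sym Os) + 2)) (trunc_cfg Rewind (rev (map bit_sym Os) @ 3 # l') (0 # []))
     = trunc_cfg Done (3 # l') (map bit_sym Os @ 0 # [])"
    by (rule tm_sweep_left_to_marker) auto
  have "length U + 2 * length Os + 3 = (length Os + 2) + (1 + (length U + length Os))"
    by simp
  then show ?thesis
    using sweep mark_end rewind by (simp only: funpow_add o_apply) (simp add: l'_def)
qed

lemma tm_output_bits: "tm_output (q, l, map bit_sym w @ [0]) = w"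
  by (induction w) (auto simp: tm_output_def bit_sym_def)

lemma trunc_tm_halted_Done: "tm_halted (trunc_tm R) (trunc_cfg Done l r)"
  by (rule trunc_tm_halted) auto

lemma trunc_tm_last_round:
  assumes "fst c < R" "fst (sep_step c a) = R"
  shows "(tm_step (trunc_tm R) ^^ (3 * length U + 4 * length Os + 10))
      (trunc_cfg (Read c) l (map bit_sym (a # b # U) @ map out_sym Os))
    = trunc_cfg Done (3 # replicate (length U) 3 @ 3 # l) (map bit_sym (Os @ [a]) @ [0])"
proof -
  let ?f = "tm_step (trunc_tm R)"
  have round: "(?f ^^ (2 * (length U + length Os) + 5))
      (trunc_cfg (Read c) l (map bit_sym (a # b # U) @ map out_sym Os))
    = trunc_cfg Clean (3 # 3 # l) (map bit_sym U @ map out_sym (Os @ [a]))"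
    using trunc_tm_copy_bit[OF assms(1), of U Os l a b] assms(2) by simp
  have steps: "3 * length U + 4 * length Os + 10
      = (length U + 2 * length (Os @ [a]) + 3) + (2 * (length U + length Os) + 5)"
    by simp
  show ?thesis
    unfolding steps funpow_add[of "length U + 2 * length (Os @ [a]) + 3"] o_apply round
    by (rule trunc_tm_clean)
qed

lemma trunc_tm_read_halts:
  assumes "fst c < R" "length U < 2"
  shows "\<exists>t \<le> 1. tm_halted (trunc_tm R) ((tm_step (trunc_tm R) ^^ t) (trunc_cfg (Read c) l (map bit_sym U @ map out_sym Os)))"
proof (cases U)
  case Nil
  have "tm_halted (trunc_tm R) (trunc_cfg (Read c) l (map out_sym Os))"
    using assms(1) by (cases Os) (auto intro!: trunc_tm_halted)
  with Nil show ?thesis by (intro exI[of _ 0]) auto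
next
  case (Cons a U')
  with assms(2) have "U = [a]" by simp
  have "tm_step (trunc_tm R) (trunc_cfg (Read c) l (bit_sym a # map out_sym Os))
      = trunc_cfg (Skip (sep_step c a) a) (3 # l) (map out_sym Os)"
    by (rule tm_step_right) (simp add: assms(1))
  moreover have "tm_halted (trunc_tm R) (trunc_cfg (Skip (sep_step c a) a) (3 # l) (map out_sym Os))"
    using assms(1) by (cases Os) (auto intro!: trunc_tm_halted simp: fst_sep_step_le)
  ultimately show ?thesis using \<open>U = [a]\<close> by (intro exI[of _ 1]) auto
qed

lemma trunc_tm_copy:
  assumes "fst c < R"
  shows "\<exists>t \<le> length U * (2 * (length U + length Os) + 5) + 2 * (length U + length Os) + 3.
    tm_halted (trunc_tm R) ((tm_step (trunc_tm R) ^^ t) (trunc_cfg (Read c) (3 # l) (map bit_sym U @ map out_sym Os))) \<and>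
    (has_fields R c (undouble U) \<longrightarrow>
      tm_output ((tm_step (trunc_tm R) ^^ t) (trunc_cfg (Read c) (3 # l) (map bit_sym U @ map out_sym Os)))
        = Os @ take_fields R c (undouble U))"
  using assms
proof (induction U arbitrary: c Os l rule: undouble.induct)
  case (1 a b U)
  let ?f = "tm_step (trunc_tm R)"
  let ?c0 = "trunc_cfg (Read c) (3 # l) (map bit_sym (a # b # U) @ map out_sym Os)"
  define c' where "c' = sep_step c a"
  show ?case
  proof (cases "fst c' = R")
    case True
    define T where "T = 3 * length U + 4 * length Os + 10"
    note run = trunc_tm_last_round[OF "1.prems" True[unfolded c'_def], of U Os "3 # l" b, folded T_def]
    have "T \<le> length (a # b # U) * (2 * (length (a # b # U) + length Os) + 5)
        + 2 * (length (a # b # U) + length Os) + 3"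
      by (simp add: T_def)
    moreover have "tm_halted (trunc_tm R) ((?f ^^ T) ?c0)"
      unfolding run by (rule trunc_tm_halted_Done)
    moreover have "tm_output ((?f ^^ T) ?c0) = Os @ take_fields R c (undouble (a # b # U))"
      unfolding run tm_output_bits using True by (simp add: c'_def)
    ultimately show ?thesis by blast
  next
    case False
    define T0 where "T0 = 2 * (length U + length Os) + 5"
    have "fst c' < R" using "1.prems" False fst_sep_step_le[of c R a] by (simp add: c'_def)
    with "1.IH"[of c' "Os @ [a]" "3 # 3 # l"] obtain t where
      t: "t \<le> length U * (2 * (length U + length Os + 1) + 5) + 2 * (length U + length Os + 1) + 3"
      and halts: "tm_halted (trunc_tm R) ((?f ^^ t) (trunc_cfg (Read c') (3 # 3 # 3 # l) (map bit_sym U @ map out_sym (Os @ [a]))))"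
      and copied: "has_fields R c' (undouble U) \<longrightarrow>
        tm_output ((?f ^^ t) (trunc_cfg (Read c') (3 # 3 # 3 # l) (map bit_sym U @ map out_sym (Os @ [a]))))
          = (Os @ [a]) @ take_fields R c' (undouble U)"
      by auto
    have run: "(?f ^^ (t + T0)) ?c0
        = (?f ^^ t) (trunc_cfg (Read c') (3 # 3 # 3 # l) (map bit_sym U @ map out_sym (Os @ [a])))"
      using trunc_tm_copy_bit[OF "1.prems", of U Os "3 # l" a b] False
      unfolding funpow_add o_apply T0_def c'_def by simp
    have "t + T0 \<le> length (a # b # U) * (2 * (length (a # b # U) + length Os) + 5)
        + 2 * (length (a # b # U) + length Os) + 3"
      using t unfolding T0_def by (simp add: algebra_simps)
    moreover have "has_fields R c (undouble (a # b # U)) = has_fields R c' (undouble U)"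
      and "take_fields R c (undouble (a # b # U)) = a # take_fields R c' (undouble U)"
      using False by (simp_all add: c'_def)
    ultimately show ?thesis
      using halts copied unfolding run[symmetric] by (intro exI[of _ "t + T0"]) simp
  qed
next
  case ("2_1" c Os l)
  then obtain t where "t \<le> 1"
    "tm_halted (trunc_tm R) ((tm_step (trunc_tm R) ^^ t) (trunc_cfg (Read c) (3 # l) (map bit_sym [] @ map out_sym Os)))"
    using trunc_tm_read_halts[of c R "[]"] by auto
  then show ?case by (intro exI[of _ t]) auto
next
  case ("2_2" a c Os l)
  then obtain t where "t \<le> 1"
    "tm_halted (trunc_tm R) ((tm_step (trunc_tm R) ^^ t) (trunc_cfg (Read c) (3 # l) (map bit_sym [a] @ map out_sym Os)))"
    using trunc_tm_read_halts[of c R "[a]"] by auto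
  then show ?case by (intro exI[of _ t]) auto
qed

lemma trunc_tm_run:
  assumes "0 < R"
  shows "\<exists>t \<le> (length w + 2) ^ 3. tm_halted (trunc_tm R) ((tm_step (trunc_tm R) ^^ t) (tm_init w)) \<and>
    (\<forall>rest. drop_first_field w = Some rest \<longrightarrow> has_fields R (0, None) (undouble rest) \<longrightarrow>
       tm_output ((tm_step (trunc_tm R) ^^ t) (tm_init w)) = take_fields R (0, None) (undouble rest))"
proof -
  let ?f = "tm_step (trunc_tm R)"
  have cubic: "N * (2 * N + 5) + 3 * N + 3 \<le> (N + 2) ^ 3" for N :: nat
    by (simp add: power3_eq_cube algebra_simps)
  show ?thesis
  proof (cases "drop_first_field w")
    case None
    with trunc_tm_seek_fails obtain t where "t \<le> length w"
      "tm_halted (trunc_tm R) ((?f ^^ t) (trunc_cfg Seek [] (map bit_sym w)))"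
      by blast
    moreover have "length w \<le> (length w + 2) ^ 3" using cubic[of "length w"] by linarith
    ultimately show ?thesis using None unfolding tm_init_trunc_cfg by (intro exI[of _ t]) auto
  next
    case (Some rest)
    with trunc_tm_seek obtain l' where "length rest < length w" and seek:
      "(?f ^^ (length w - length rest)) (trunc_cfg Seek [] (map bit_sym w))
         = trunc_cfg (Read (0, None)) (3 # l') (map bit_sym rest)"
      by blast
    moreover obtain t where t: "t \<le> length rest * (2 * length rest + 5) + 2 * length rest + 3"
      "tm_halted (trunc_tm R) ((?f ^^ t) (trunc_cfg (Read (0, None)) (3 # l') (map bit_sym rest)))"
      "has_fields R (0, None) (undouble rest) \<longrightarrow>
        tm_output ((?f ^^ t) (trunc_cfg (Read (0, None)) (3 # l') (map bit_sym rest)))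
          = take_fields R (0, None) (undouble rest)"
      using trunc_tm_copy[of "(0, None)" R "rest" "[]" l'] assms by auto
    moreover have "length rest * (2 * length rest + 5) \<le> length w * (2 * length w + 5)"
      using \<open>length rest < length w\<close> by (intro mult_le_mono) auto
    moreover have "(?f ^^ (t + (length w - length rest))) (trunc_cfg Seek [] (map bit_sym w))
        = (?f ^^ t) (trunc_cfg (Read (0, None)) (3 # l') (map bit_sym rest))"
      by (simp only: funpow_add o_apply seek)
    ultimately show ?thesis
      using cubic[of "length w"] Some unfolding tm_init_trunc_cfg
      by (intro exI[of _ "t + (length w - length rest)"]) auto
  qed
qed

lemma poly_time_computable_trunc_tm: "0 < R \<Longrightarrow> poly_time_computable (tm_fun (trunc_tm R))"
  by (rule poly_time_computable_tm_fun[OF tm_finite_trunc_tm]) (use trunc_tm_run in blast)+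

lemma tm_fun_trunc_tm:
  assumes "0 < R" "drop_first_field w = Some rest" "has_fields R (0, None) (undouble rest)"
  shows "tm_fun (trunc_tm R) w = take_fields R (0, None) (undouble rest)"
proof -
  from trunc_tm_run[OF assms(1), of w] obtain t where
    "tm_halted (trunc_tm R) ((tm_step (trunc_tm R) ^^ t) (tm_init w))"
    "tm_output ((tm_step (trunc_tm R) ^^ t) (tm_init w)) = take_fields R (0, None) (undouble rest)"
    using assms(2,3) by blast
  then show ?thesis by (simp add: tm_fun_eqI)
qed

section \<open>The reduction\<close>

lemma tm_fun_trunc_tm_enc_list:
  assumes "0 < R" "R \<le> length cs"
  shows "tm_fun (trunc_tm R) (enc_list [x, enc_list cs]) = enc_list (take R cs)"
proof -
  let ?rest = "double (enc_list cs) @ [False, True]"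
  have "drop_first_field (enc_list [x, enc_list cs]) = Some ?rest"
    by (simp add: drop_first_field_double)
  moreover have "undouble ?rest = enc_list cs @ [False]"
    using undouble_double[of "enc_list cs" "[False, True]"] by simp
  ultimately show ?thesis
    using tm_fun_trunc_tm take_fields_enc_list[of 0 R cs "[False]"] assms by simp
qed

lemma kneser_solution_take:
  "kneser_solution r G col Bs \<Longrightarrow> r' \<le> r \<Longrightarrow> kneser_solution r' G col (take r' Bs)"
  by (auto simp: kneser_solution_def)

lemma Kneser_problem_truncate_solution:
  assumes "0 < r1" "r1 \<le> r2" "snd (Kneser_problem r2 A encA n F m) x y"
  shows "snd (Kneser_problem r1 A encA n F m) x (tm_fun (trunc_tm r1) (enc_list [x, y]))"
proof -
  from assms(3) obtain \<alpha> C Bs where inst: "\<alpha> \<in> A" "valid_circuit (n \<alpha>) (m \<alpha>) C"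
    "x = enc_instance encA \<alpha> C" and "y = enc_solution (n \<alpha>) Bs"
    and sol: "kneser_solution r2 (F \<alpha>) (\<lambda>B. circuit_value C (charvec (n \<alpha>) B)) Bs"
    by (auto simp: Kneser_problem_def)
  have "length Bs = r2" using sol by (simp add: kneser_solution_def)
  then have "tm_fun (trunc_tm r1) (enc_list [x, enc_list (map (charvec (n \<alpha>)) Bs)])
      = enc_list (take r1 (map (charvec (n \<alpha>)) Bs))"
    using assms(1,2) by (intro tm_fun_trunc_tm_enc_list) auto
  then have "tm_fun (trunc_tm r1) (enc_list [x, y]) = enc_solution (n \<alpha>) (take r1 Bs)"
    using \<open>y = enc_solution (n \<alpha>) Bs\<close> by (simp only: enc_solution_def take_map)
  with inst show ?thesis
    unfolding Kneser_problem_def snd_conv using kneser_solution_take[OF sol assms(2)] by blast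
qed

theorem lemma5p8:
  fixes r1 r2 :: nat and A :: "'a set" and encA :: "'a \<Rightarrow> bool list"
    and n :: "'a \<Rightarrow> nat" and F :: "'a \<Rightarrow> nat set set" and m :: "'a \<Rightarrow> nat"
  assumes "2 \<le> r1" and "r1 \<le> r2"
    and "inj_on encA A"
    and "\<forall>\<alpha>\<in>A. \<forall>B\<in>F \<alpha>. B \<noteq> {} \<and> B \<subseteq> {1..n \<alpha>}"
    and "\<forall>\<alpha>\<in>A. m \<alpha> < kneser_chi r2 (F \<alpha>)"
  shows "poly_reducible (Kneser_problem r1 A encA n F m) (Kneser_problem r2 A encA n F m)"
proof -
  have "0 < r1" using assms(1) by simp
  have "fst (Kneser_problem r1 A encA n F m) = fst (Kneser_problem r2 A encA n F m)"
    by (simp add: Kneser_problem_def)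
  then show ?thesis
    unfolding poly_reducible_def
    using poly_time_computable_id poly_time_computable_trunc_tm[OF \<open>0 < r1\<close>]
      Kneser_problem_truncate_solution[OF \<open>0 < r1\<close> assms(2)] by blast
qed

end
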